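(* For all $N_1,N_2\ge0$, the multiplication morphism $\mathfrak m_{N_1,N_2}:\mathcal M(N_1,K)\times\mathcal M(N_2,K)\to\mathcal M(N_1+N_2,K)$ is dominant.
   Context: $\mathcal M(N,K)=\mathrm{Rep}(N,K)/\!/\mathrm{GL}_N$, with $\mathrm{Rep}(N,K)$ the triples $(B,\psi,\overline\psi)$, $B\in\mathrm{Mat}_{N\times N}(\mathbb C)$, $\psi\in\mathrm{Mat}_{N\times K}$, $\overline\psi\in\mathrm{Mat}_{K\times N}$, and $g\cdot(B,\psi,\overline\psi)=(gBg^{-1},g\psi,\overline\psi g^{-1})$. $\mathfrak m_{N_1,N_2}$ sends $(B^{(1)},\psi^{(1)},\overline\psi^{(1)})\times(B^{(2)},\psi^{(2)},\overline\psi^{(2)})$ to $\left(\begin{bmatrix}B^{(1)}&\psi^{(1)}\overline\psi^{(2)}\\-\psi^{(2)}\overline\psi^{(1)}&B^{(2)}\end{bmatrix},\begin{bmatrix}\psi^{(1)}\\\psi^{(2)}\end{bmatrix},\begin{bmatrix}\overline\psi^{(1)}&\overline\psi^{(2)}\end{bmatrix}\right)$. *)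

theory Defs
  imports Complex_Main
begin

text \<open>Matrices are functions nat => nat => complex; an N x M matrix is one whose
  entries vanish outside the index box {..<N} x {..<M}.\<close>

type_synonym cmat = "nat \<Rightarrow> nat \<Rightarrow> complex"

type_synonym rep = "cmat \<times> cmat \<times> cmat"

definition supported :: "nat \<Rightarrow> nat \<Rightarrow> cmat \<Rightarrow> bool" where
  "supported n m A \<longleftrightarrow> (\<forall>i j. \<not> (i < n \<and> j < m) \<longrightarrow> A i j = 0)"

definition Rep :: "nat \<Rightarrow> nat \<Rightarrow> rep set" where
  "Rep N K = {(B, psi, psib). supported N N B \<and> supported N K psi \<and> supported K N psib}"

definition mmul :: "nat \<Rightarrow> cmat \<Rightarrow> cmat \<Rightarrow> cmat" where
  "mmul n A C = (\<lambda>i j. \<Sum>l<n. A i l * C l j)"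

definition idm :: "nat \<Rightarrow> cmat" where
  "idm n = (\<lambda>i j. if i = j \<and> i < n then 1 else 0)"

definition GL_pair :: "nat \<Rightarrow> cmat \<Rightarrow> cmat \<Rightarrow> bool" where
  "GL_pair N g h \<longleftrightarrow> supported N N g \<and> supported N N h \<and>
     mmul N g h = idm N \<and> mmul N h g = idm N"

definition act :: "nat \<Rightarrow> nat \<Rightarrow> cmat \<Rightarrow> cmat \<Rightarrow> rep \<Rightarrow> rep" where
  "act N K g h x = (case x of (B, psi, psib) \<Rightarrow>
     (mmul N (mmul N g B) h, mmul N g psi, mmul N psib h))"

text \<open>Polynomial functions in the matrix coordinates (the coordinate ring of Rep(N,K)
  is the restriction of these to Rep(N,K)).\<close>
inductive poly_fun :: "(rep \<Rightarrow> complex) \<Rightarrow> bool" where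
  pf_const: "poly_fun (\<lambda>x. c)"
| pf_B: "poly_fun (\<lambda>(B, psi, psib). B i j)"
| pf_psi: "poly_fun (\<lambda>(B, psi, psib). psi i j)"
| pf_psib: "poly_fun (\<lambda>(B, psi, psib). psib i j)"
| pf_add: "poly_fun f \<Longrightarrow> poly_fun g \<Longrightarrow> poly_fun (\<lambda>x. f x + g x)"
| pf_mult: "poly_fun f \<Longrightarrow> poly_fun g \<Longrightarrow> poly_fun (\<lambda>x. f x * g x)"

text \<open>GL_N-invariant polynomial functions on Rep(N,K) = coordinate ring of M(N,K).\<close>
definition invariant_poly :: "nat \<Rightarrow> nat \<Rightarrow> (rep \<Rightarrow> complex) \<Rightarrow> bool" where
  "invariant_poly N K f \<longleftrightarrow> poly_fun f \<and>
     (\<forall>g h x. GL_pair N g h \<and> x \<in> Rep N K \<longrightarrow> f (act N K g h x) = f x)"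

definition mult_map :: "nat \<Rightarrow> nat \<Rightarrow> nat \<Rightarrow> rep \<Rightarrow> rep \<Rightarrow> rep" where
  "mult_map N1 N2 K x1 x2 = (case x1 of (B1, psi1, psib1) \<Rightarrow> case x2 of (B2, psi2, psib2) \<Rightarrow>
     ((\<lambda>i j.
        if i < N1 \<and> j < N1 then B1 i j
        else if i < N1 \<and> N1 \<le> j \<and> j < N1 + N2 then (\<Sum>a<K. psi1 i a * psib2 a (j - N1))
        else if N1 \<le> i \<and> i < N1 + N2 \<and> j < N1 then - (\<Sum>a<K. psi2 (i - N1) a * psib1 a j)
        else if N1 \<le> i \<and> i < N1 + N2 \<and> N1 \<le> j \<and> j < N1 + N2 then B2 (i - N1) (j - N1)
        else 0),
      (\<lambda>i a. if i < N1 then psi1 i a else if i < N1 + N2 then psi2 (i - N1) a else 0),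
      (\<lambda>a i. if i < N1 then psib1 a i else if i < N1 + N2 then psib2 a (i - N1) else 0)))"

text \<open>Dominance of M(N1,K) x M(N2,K) -> M(N1+N2,K) between affine (reduced) varieties
  = injectivity of the comorphism on coordinate rings of invariants.\<close>
definition mult_dominant :: "nat \<Rightarrow> nat \<Rightarrow> nat \<Rightarrow> bool" where
  "mult_dominant N1 N2 K \<longleftrightarrow>
     (\<forall>f. invariant_poly (N1 + N2) K f \<longrightarrow>
        (\<forall>x1\<in>Rep N1 K. \<forall>x2\<in>Rep N2 K. f (mult_map N1 N2 K x1 x2) = 0) \<longrightarrow>
        (\<forall>x\<in>Rep (N1 + N2) K. f x = 0))"

end

theory Submission
  imports Defs "Jordan_Normal_Form.Schur_Decomposition"
begin

text \<open>Call a point (B, \<psi>, \<psi>bar) of Rep(N,K) split if B agrees with \<psi>\<psi>bar above the diagonal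
  and with -\<psi>\<psi>bar below it. Every split point of Rep(N1+N2,K) is a product of points of
  Rep(N1,K) and Rep(N2,K), so it suffices that an invariant polynomial f vanishing on split
  points vanishes identically. This goes by induction on N. For x1 in Rep(1,K) the map
  m_{1,N}(x1, -) is equivariant along g \<mapsto> diag(1, g), so f(m_{1,N}(x1, -)) is again invariant and
  vanishes on split points; hence f vanishes on the image of m_{1,N}. That image meets the
  GL_{N+1}-orbit of every point with B - \<psi>\<psi>bar diagonalisable: use a basis whose first vector is
  an eigenvector of B + \<psi>\<psi>bar and whose other vectors span the kernel of a left eigenvector of
  B - \<psi>\<psi>bar. Such points are dense, and polynomial functions are continuous.\<close>

section \<open>Polynomial functions\<close>

lemma poly_fun_B_entry: "poly_fun (\<lambda>x. fst x i j)"
  using pf_B[of i j] by (simp add: case_prod_unfold)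

lemma poly_fun_psi_entry: "poly_fun (\<lambda>x. fst (snd x) i j)"
  using pf_psi[of i j] by (simp add: case_prod_unfold)

lemma poly_fun_psib_entry: "poly_fun (\<lambda>x. snd (snd x) i j)"
  using pf_psib[of i j] by (simp add: case_prod_unfold)

lemma poly_fun_If: "poly_fun f \<Longrightarrow> poly_fun g \<Longrightarrow> poly_fun (\<lambda>x. if P then f x else g x)"
  by (cases P) auto

lemma poly_fun_uminus: "poly_fun f \<Longrightarrow> poly_fun (\<lambda>x. - f x)"
  using pf_mult[OF pf_const[of "-1"]] by simp

lemma poly_fun_sum: "(\<And>a. poly_fun (F a)) \<Longrightarrow> poly_fun (\<lambda>x. \<Sum>a<(n::nat). F a x)"
  by (induction n) (auto intro: pf_add pf_const)

lemma poly_fun_compose: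
  assumes "poly_fun f"
    and "\<And>i j. poly_fun (\<lambda>y. fst (F y) i j)"
    and "\<And>i j. poly_fun (\<lambda>y. fst (snd (F y)) i j)"
    and "\<And>i j. poly_fun (\<lambda>y. snd (snd (F y)) i j)"
  shows "poly_fun (\<lambda>y. f (F y))"
  using assms(1) by induction (auto simp: split_beta intro: assms(2-4) pf_add pf_mult pf_const)

lemma poly_fun_tendsto:
  assumes "poly_fun f"
    and "\<And>i j. (\<lambda>k. fst (X k) i j) \<longlonglongrightarrow> fst x i j"
    and "\<And>i j. (\<lambda>k. fst (snd (X k)) i j) \<longlonglongrightarrow> fst (snd x) i j"
    and "\<And>i j. (\<lambda>k. snd (snd (X k)) i j) \<longlonglongrightarrow> snd (snd x) i j"
  shows "(\<lambda>k. f (X k)) \<longlonglongrightarrow> f x"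
  using assms(1) by induction (auto simp: split_beta intro: assms(2-4) tendsto_add tendsto_mult)

lemma poly_fun_mult_map_right:
  assumes "poly_fun f"
  shows "poly_fun (\<lambda>x2. f (mult_map N1 N2 K x1 x2))"
proof (rule poly_fun_compose[OF assms])
  fix i j
  show "poly_fun (\<lambda>x2. fst (mult_map N1 N2 K x1 x2) i j)"
    unfolding mult_map_def split_beta fst_conv snd_conv
    by (intro poly_fun_If poly_fun_sum poly_fun_uminus pf_mult pf_const
        poly_fun_B_entry poly_fun_psi_entry poly_fun_psib_entry)
  show "poly_fun (\<lambda>x2. fst (snd (mult_map N1 N2 K x1 x2)) i j)"
    unfolding mult_map_def split_beta fst_conv snd_conv
    by (intro poly_fun_If pf_const poly_fun_psi_entry)
  show "poly_fun (\<lambda>x2. snd (snd (mult_map N1 N2 K x1 x2)) i j)"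
    unfolding mult_map_def split_beta fst_conv snd_conv
    by (intro poly_fun_If pf_const poly_fun_psib_entry)
qed

section \<open>The multiplication map and split points\<close>

lemma mult_map_in_Rep:
  "x1 \<in> Rep N1 K \<Longrightarrow> x2 \<in> Rep N2 K \<Longrightarrow> mult_map N1 N2 K x1 x2 \<in> Rep (N1 + N2) K"
  unfolding Rep_def mult_map_def supported_def by (auto split: prod.splits)

lemma block_form_in_mult_map_image:
  assumes y: "(B, psi, psib) \<in> Rep (N1 + N2) K"
    and upper: "\<And>i j. i < N1 \<Longrightarrow> N1 \<le> j \<Longrightarrow> j < N1 + N2 \<Longrightarrow>
      B i j = (\<Sum>a<K. psi i a * psib a j)"
    and lower: "\<And>i j. j < N1 \<Longrightarrow> N1 \<le> i \<Longrightarrow> i < N1 + N2 \<Longrightarrow>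
      B i j = - (\<Sum>a<K. psi i a * psib a j)"
  shows "\<exists>x1\<in>Rep N1 K. \<exists>x2\<in>Rep N2 K. (B, psi, psib) = mult_map N1 N2 K x1 x2"
proof -
  have sB: "supported (N1 + N2) (N1 + N2) B" and spsi: "supported (N1 + N2) K psi"
    and spsib: "supported K (N1 + N2) psib"
    using y unfolding Rep_def by auto
  define x1 :: rep where "x1 = ((\<lambda>i j. if i < N1 \<and> j < N1 then B i j else 0),
    (\<lambda>i a. if i < N1 then psi i a else 0), (\<lambda>a j. if j < N1 then psib a j else 0))"
  define x2 :: rep where "x2 = ((\<lambda>i j. if i < N2 \<and> j < N2 then B (N1 + i) (N1 + j) else 0),
    (\<lambda>i a. if i < N2 then psi (N1 + i) a else 0), (\<lambda>a j. if j < N2 then psib a (N1 + j) else 0))"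
  have "x1 \<in> Rep N1 K" "x2 \<in> Rep N2 K"
    using spsi spsib unfolding x1_def x2_def Rep_def supported_def by auto
  moreover have "mult_map N1 N2 K x1 x2 = (B, psi, psib)"
  proof (intro prod_eqI ext)
    fix i j
    consider "i < N1" "j < N1" | "i < N1" "N1 \<le> j" "j < N1 + N2" | "N1 \<le> i" "i < N1 + N2" "j < N1"
      | "N1 \<le> i" "i < N1 + N2" "N1 \<le> j" "j < N1 + N2" | "\<not> (i < N1 + N2 \<and> j < N1 + N2)"
      by linarith
    then show "fst (mult_map N1 N2 K x1 x2) i j = fst (B, psi, psib) i j"
      by cases (use sB in \<open>auto simp: upper lower mult_map_def x1_def x2_def supported_def
          le_add_diff_inverse less_diff_conv2\<close>)
    show "fst (snd (mult_map N1 N2 K x1 x2)) i j = fst (snd (B, psi, psib)) i j"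
      using spsi by (auto simp: mult_map_def x1_def x2_def supported_def)
    show "snd (snd (mult_map N1 N2 K x1 x2)) i j = snd (snd (B, psi, psib)) i j"
      using spsib by (auto simp: mult_map_def x1_def x2_def supported_def)
  qed
  ultimately show ?thesis by metis
qed

text \<open>The iterated products of points of Rep(1,K).\<close>

definition split_Rep :: "nat \<Rightarrow> nat \<Rightarrow> rep set" where
  "split_Rep N K = {x \<in> Rep N K.
     (\<forall>i j. i < j \<and> j < N \<longrightarrow> fst x i j = (\<Sum>a<K. fst (snd x) i a * snd (snd x) a j)) \<and>
     (\<forall>i j. j < i \<and> i < N \<longrightarrow> fst x i j = - (\<Sum>a<K. fst (snd x) i a * snd (snd x) a j))}"

lemma split_Rep_in_mult_map_image:
  assumes "x \<in> split_Rep (N1 + N2) K"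
  shows "\<exists>x1\<in>Rep N1 K. \<exists>x2\<in>Rep N2 K. x = mult_map N1 N2 K x1 x2"
proof -
  obtain B psi psib where x: "x = (B, psi, psib)" by (cases x)
  show ?thesis
    using assms unfolding x split_Rep_def by (intro block_form_in_mult_map_image) auto
qed

lemma mult_map_one_entries:
  assumes "(B2, psi2, psib2) \<in> Rep N K"
  shows "fst (mult_map 1 N K (B1, psi1, psib1) (B2, psi2, psib2)) 0 0 = B1 0 0"
    "fst (mult_map 1 N K (B1, psi1, psib1) (B2, psi2, psib2)) 0 (Suc j) =
      (\<Sum>a<K. psi1 0 a * psib2 a j)"
    "fst (mult_map 1 N K (B1, psi1, psib1) (B2, psi2, psib2)) (Suc i) 0 =
      - (\<Sum>a<K. psi2 i a * psib1 a 0)"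
    "fst (mult_map 1 N K (B1, psi1, psib1) (B2, psi2, psib2)) (Suc i) (Suc j) = B2 i j"
    "fst (snd (mult_map 1 N K (B1, psi1, psib1) (B2, psi2, psib2))) 0 a = psi1 0 a"
    "fst (snd (mult_map 1 N K (B1, psi1, psib1) (B2, psi2, psib2))) (Suc i) a = psi2 i a"
    "snd (snd (mult_map 1 N K (B1, psi1, psib1) (B2, psi2, psib2))) a 0 = psib1 a 0"
    "snd (snd (mult_map 1 N K (B1, psi1, psib1) (B2, psi2, psib2))) a (Suc j) = psib2 a j"
  using assms unfolding mult_map_def Rep_def supported_def by auto

lemma mult_map_one_split_Rep:
  assumes x1: "x1 \<in> Rep 1 K" and x2: "x2 \<in> split_Rep N K"
  shows "mult_map 1 N K x1 x2 \<in> split_Rep (Suc N) K"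
proof -
  obtain B1 psi1 psib1 where x1_eq: "x1 = (B1, psi1, psib1)" by (cases x1)
  obtain B2 psi2 psib2 where x2_eq: "x2 = (B2, psi2, psib2)" by (cases x2)
  have x2_Rep: "(B2, psi2, psib2) \<in> Rep N K" using x2 unfolding x2_eq split_Rep_def by auto
  note entries = mult_map_one_entries[OF x2_Rep, of B1 psi1 psib1]
  have upper: "B2 i j = (\<Sum>a<K. psi2 i a * psib2 a j)" if "i < j" "j < N" for i j
    using x2 that unfolding x2_eq split_Rep_def by auto
  have lower: "B2 i j = - (\<Sum>a<K. psi2 i a * psib2 a j)" if "j < i" "i < N" for i j
    using x2 that unfolding x2_eq split_Rep_def by auto
  show ?thesis
    unfolding split_Rep_def
  proof (intro CollectI conjI allI impI, goal_cases)
    case 1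
    show ?case using mult_map_in_Rep[OF x1 x2_Rep] unfolding x2_eq by simp
  next
    case (2 i j)
    then show ?case by (cases i; cases j) (auto simp: x1_eq x2_eq entries upper simp del: One_nat_def)
  next
    case (3 i j)
    then show ?case by (cases i; cases j) (auto simp: x1_eq x2_eq entries lower simp del: One_nat_def)
  qed
qed

section \<open>Equivariance along GL_N \<subseteq> GL_{N+1}\<close>

definition block_diag_one :: "cmat \<Rightarrow> cmat" where
  "block_diag_one g = (\<lambda>i j. if i = 0 \<and> j = 0 then 1
     else if 0 < i \<and> 0 < j then g (i - 1) (j - 1) else 0)"

lemma mmul_block_diag_one_left:
  "mmul (Suc N) (block_diag_one g) X i j =
    (if i = 0 then X 0 j else \<Sum>l<N. g (i - 1) l * X (Suc l) j)"
  unfolding mmul_def block_diag_one_def sum.lessThan_Suc_shift by simp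

lemma mmul_block_diag_one_right:
  "mmul (Suc N) X (block_diag_one h) i j =
    (if j = 0 then X i 0 else \<Sum>l<N. X i (Suc l) * h l (j - 1))"
  unfolding mmul_def block_diag_one_def sum.lessThan_Suc_shift by simp

lemma supported_mmul: "supported r n A \<Longrightarrow> supported n c C \<Longrightarrow> supported r c (mmul n A C)"
  unfolding supported_def mmul_def by auto

lemma act_in_Rep: "GL_pair N g h \<Longrightarrow> x \<in> Rep N K \<Longrightarrow> act N K g h x \<in> Rep N K"
  unfolding GL_pair_def Rep_def act_def by (auto intro!: supported_mmul split: prod.splits)

lemma GL_pair_block_diag_one:
  assumes "GL_pair N g h"
  shows "GL_pair (Suc N) (block_diag_one g) (block_diag_one h)"
proof -
  have supp: "supported (Suc N) (Suc N) (block_diag_one A)" if "supported N N A" for A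
    unfolding supported_def
  proof (intro allI impI)
    fix i j assume out: "\<not> (i < Suc N \<and> j < Suc N)"
    then have "i = 0 \<or> j = 0 \<or> \<not> (i - 1 < N \<and> j - 1 < N)" by auto
    then show "block_diag_one A i j = 0"
      using that out unfolding supported_def block_diag_one_def by auto
  qed
  have inv: "mmul (Suc N) (block_diag_one A) (block_diag_one C) = idm (Suc N)"
    if AC: "mmul N A C = idm N" for A C
  proof (intro ext)
    fix i j
    show "mmul (Suc N) (block_diag_one A) (block_diag_one C) i j = idm (Suc N) i j"
    proof (cases i)
      case 0
      then show ?thesis by (simp add: mmul_block_diag_one_left) (simp add: block_diag_one_def idm_def)
    next
      case (Suc i')
      have "(\<Sum>l<N. A i' l * block_diag_one C (Suc l) j) =
          (if j = 0 then 0 else mmul N A C i' (j - 1))"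
        unfolding block_diag_one_def mmul_def by auto
      then show ?thesis using Suc AC by (auto simp: mmul_block_diag_one_left idm_def)
    qed
  qed
  show ?thesis
    using assms supp inv unfolding GL_pair_def by auto
qed

lemma mult_map_one_act:
  assumes gh: "GL_pair N g h" and x2: "x2 \<in> Rep N K"
  shows "mult_map 1 N K x1 (act N K g h x2) =
    act (Suc N) K (block_diag_one g) (block_diag_one h) (mult_map 1 N K x1 x2)"
proof -
  obtain B1 psi1 psib1 where x1_eq: "x1 = (B1, psi1, psib1)" by (cases x1)
  obtain B2 psi2 psib2 where x2_eq: "x2 = (B2, psi2, psib2)" by (cases x2)
  have act_x2: "act N K g h x2 = (mmul N (mmul N g B2) h, mmul N g psi2, mmul N psib2 h)"
    unfolding x2_eq act_def by simp
  have x2_Rep: "(B2, psi2, psib2) \<in> Rep N K" using x2 unfolding x2_eq .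
  have gx2_Rep: "(mmul N (mmul N g B2) h, mmul N g psi2, mmul N psib2 h) \<in> Rep N K"
    using act_in_Rep[OF gh x2] unfolding act_x2 .
  define M where "M = mult_map 1 N K x1 x2"
  have act_M: "act (Suc N) K (block_diag_one g) (block_diag_one h) M =
     (mmul (Suc N) (mmul (Suc N) (block_diag_one g) (fst M)) (block_diag_one h),
      mmul (Suc N) (block_diag_one g) (fst (snd M)), mmul (Suc N) (snd (snd M)) (block_diag_one h))"
    unfolding act_def by (cases M) simp
  note L = mult_map_one_entries[OF gx2_Rep, of B1 psi1 psib1]
  note R = mult_map_one_entries[OF x2_Rep, of B1 psi1 psib1, folded x1_eq x2_eq, folded M_def]
  note mmul_block = mmul_block_diag_one_left mmul_block_diag_one_right
  show ?thesis
    unfolding act_x2 x1_eq[symmetric] M_def[symmetric] act_M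
  proof (intro prod_eqI ext, goal_cases)
    case (1 i j)
    show ?case
    proof (cases i; cases j)
      assume "i = 0" "j = 0"
      then show ?thesis unfolding x1_eq using L R by (simp add: mmul_block)
    next
      fix j' assume "i = 0" "j = Suc j'"
      have "(\<Sum>a<K. psi1 0 a * mmul N psib2 h a j') = (\<Sum>l<N. (\<Sum>a<K. psi1 0 a * psib2 a l) * h l j')"
        unfolding mmul_def
        by (simp add: sum_distrib_left sum_distrib_right mult.assoc sum.swap[of _ "{..<N}"])
      with \<open>i = 0\<close> \<open>j = Suc j'\<close> show ?thesis unfolding x1_eq using L R by (simp add: mmul_block)
    next
      fix i' assume "i = Suc i'" "j = 0"
      have "- (\<Sum>a<K. mmul N g psi2 i' a * psib1 a 0) = (\<Sum>l<N. g i' l * - (\<Sum>a<K. psi2 l a * psib1 a 0))"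
        unfolding mmul_def
        by (simp add: sum_distrib_left sum_distrib_right mult.assoc sum.swap[of _ "{..<N}"] sum_negf)
      with \<open>i = Suc i'\<close> \<open>j = 0\<close> show ?thesis unfolding x1_eq using L R by (simp add: mmul_block)
    next
      fix i' j' assume "i = Suc i'" "j = Suc j'"
      then show ?thesis unfolding x1_eq using L R by (simp add: mmul_block mmul_def[of N])
    qed
  next
    case (2 i j)
    show ?case unfolding x1_eq using L R by (cases i) (simp_all add: mmul_block mmul_def[of N])
  next
    case (3 i j)
    show ?case unfolding x1_eq using L R by (cases j) (simp_all add: mmul_block mmul_def[of N])
  qed
qed

lemma invariant_poly_mult_map_one:
  assumes inv: "invariant_poly (Suc N) K f" and x1: "x1 \<in> Rep 1 K"
  shows "invariant_poly N K (\<lambda>x2. f (mult_map 1 N K x1 x2))"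
  unfolding invariant_poly_def
proof (intro conjI allI impI)
  show "poly_fun (\<lambda>x2. f (mult_map 1 N K x1 x2))"
    using inv unfolding invariant_poly_def by (intro poly_fun_mult_map_right) auto
next
  fix g h x assume gh: "GL_pair N g h \<and> x \<in> Rep N K"
  have "mult_map 1 N K x1 x \<in> Rep (Suc N) K"
    using mult_map_in_Rep[OF x1, of x N] gh by simp
  then show "f (mult_map 1 N K x1 (act N K g h x)) = f (mult_map 1 N K x1 x)"
    using inv GL_pair_block_diag_one[of N g h] gh
    unfolding invariant_poly_def mult_map_one_act[OF conjunct1[OF gh] conjunct2[OF gh]] by blast
qed

section \<open>Separating left eigenvectors\<close>

lemma index_mult_mat_sum:
  "A \<in> carrier_mat r m \<Longrightarrow> B \<in> carrier_mat m c \<Longrightarrow> i < r \<Longrightarrow> j < c \<Longrightarrow>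
    (A * B) $$ (i, j) = (\<Sum>l<m. A $$ (i, l) * B $$ (l, j))"
  by (auto simp: scalar_prod_def lessThan_atLeast0 intro!: sum.cong)

text \<open>Equivalently, A is diagonalisable.\<close>

definition left_eigvecs_separate :: "nat \<Rightarrow> 'a :: field mat \<Rightarrow> bool" where
  "left_eigvecs_separate n A \<longleftrightarrow> (\<forall>v \<in> carrier_vec n. v \<noteq> 0\<^sub>v n \<longrightarrow>
     (\<exists>l \<in> carrier_vec n. \<exists>\<mu>. transpose_mat A *\<^sub>v l = \<mu> \<cdot>\<^sub>v l \<and> l \<bullet> v \<noteq> 0))"

lemma left_eigvecs_separate_similar:
  fixes T :: "'a :: field mat"
  assumes sep: "left_eigvecs_separate n T" and T: "T \<in> carrier_mat n n"
    and P: "P \<in> carrier_mat n n" and Q: "Q \<in> carrier_mat n n"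
    and PQ: "P * Q = 1\<^sub>m n" and QP: "Q * P = 1\<^sub>m n"
  shows "left_eigvecs_separate n (P * T * Q)"
  unfolding left_eigvecs_separate_def
proof (intro ballI impI)
  fix v :: "'a vec" assume v: "v \<in> carrier_vec n" and v0: "v \<noteq> 0\<^sub>v n"
  have Qv: "Q *\<^sub>v v \<in> carrier_vec n" using Q v by simp
  have "Q *\<^sub>v v \<noteq> 0\<^sub>v n"
  proof
    assume "Q *\<^sub>v v = 0\<^sub>v n"
    then have "v = P *\<^sub>v 0\<^sub>v n" using P Q v PQ by (metis assoc_mult_mat_vec one_mult_mat_vec)
    also have "\<dots> = 0\<^sub>v n" using P by (intro eq_vecI) auto
    finally show False using v0 by contradiction
  qed
  then obtain l \<mu> where l: "l \<in> carrier_vec n" and eig: "transpose_mat T *\<^sub>v l = \<mu> \<cdot>\<^sub>v l"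
    and lv: "l \<bullet> (Q *\<^sub>v v) \<noteq> 0"
    using sep Qv unfolding left_eigvecs_separate_def by blast
  have tQP: "transpose_mat P * transpose_mat Q = 1\<^sub>m n"
    using transpose_mult[OF Q P] QP by simp
  have "transpose_mat (P * T * Q) *\<^sub>v (transpose_mat Q *\<^sub>v l) =
      transpose_mat Q *\<^sub>v (transpose_mat T *\<^sub>v ((transpose_mat P * transpose_mat Q) *\<^sub>v l))"
    using P T Q l by (simp add: transpose_mult[of _ n n _ n] assoc_mult_mat_vec[of _ n n _ n])
  also have "\<dots> = \<mu> \<cdot>\<^sub>v (transpose_mat Q *\<^sub>v l)"
    using Q l by (simp add: tQP eig mult_mat_vec)
  finally show "\<exists>l' \<in> carrier_vec n. \<exists>\<mu>. transpose_mat (P * T * Q) *\<^sub>v l' = \<mu> \<cdot>\<^sub>v l' \<and> l' \<bullet> v \<noteq> 0"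
    using transpose_vec_mult_scalar[OF Q v l] lv Q l by auto
qed

lemma sum_single_support:
  "finite A \<Longrightarrow> k \<in> A \<Longrightarrow> (\<And>m. m \<in> A \<Longrightarrow> m \<noteq> k \<Longrightarrow> g m = 0) \<Longrightarrow> sum g A = g k"
  by (subst sum.mono_neutral_right[of A "{k}"]) auto

lemma nonzero_vec_first_nonzero:
  assumes "v \<in> carrier_vec n" "v \<noteq> 0\<^sub>v n"
  obtains k where "k < n" "v $ k \<noteq> 0" "\<And>m. m < k \<Longrightarrow> v $ m = 0"
proof -
  obtain m where m: "m < n" "v $ m \<noteq> 0" using assms by (auto simp: vec_eq_iff)
  define k where "k = (LEAST m. v $ m \<noteq> 0)"
  show thesis
  proof (rule that)
    show "v $ k \<noteq> 0" using LeastI[of "\<lambda>m. v $ m \<noteq> 0", OF m(2)] unfolding k_def .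
    show "k < n" using Least_le[of "\<lambda>m. v $ m \<noteq> 0", OF m(2)] m(1) unfolding k_def by simp
    show "v $ j = 0" if "j < k" for j using not_less_Least[of j] that unfolding k_def by blast
  qed
qed

lemma nonzero_vec_last_nonzero:
  assumes "v \<in> carrier_vec n" "v \<noteq> 0\<^sub>v n"
  obtains k where "k < n" "v $ k \<noteq> 0" "\<And>m. k < m \<Longrightarrow> m < n \<Longrightarrow> v $ m = 0"
proof -
  define S where "S = {m. m < n \<and> v $ m \<noteq> 0}"
  have fin: "finite S" and "S \<noteq> {}" using assms by (auto simp: S_def vec_eq_iff)
  then have "Max S \<in> S" by simp
  show thesis
  proof (rule that)
    show "Max S < n" "v $ Max S \<noteq> 0" using \<open>Max S \<in> S\<close> unfolding S_def by auto
    show "v $ m = 0" if "Max S < m" "m < n" for m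
    proof (rule ccontr)
      assume "v $ m \<noteq> 0"
      then have "m \<in> S" using that(2) unfolding S_def by simp
      then show False using Max_ge[OF fin] that(1) by (meson leD)
    qed
  qed
qed

lemma upper_triangular_left_eigenvector_lead:
  fixes T :: "'a :: field mat"
  assumes T: "T \<in> carrier_mat n n" and ut: "upper_triangular T" and u: "u \<in> carrier_vec n"
    and eig: "transpose_mat T *\<^sub>v u = c \<cdot>\<^sub>v u"
    and k: "k < n" and lead: "\<And>m. m < k \<Longrightarrow> u $ m = 0"
  shows "T $$ (k, k) * u $ k = c * u $ k"
proof -
  have "c * u $ k = (transpose_mat T *\<^sub>v u) $ k" using eig u k by simp
  also have "\<dots> = (\<Sum>m<n. T $$ (m, k) * u $ m)"
    using T u k by (auto simp: scalar_prod_def lessThan_atLeast0 intro!: sum.cong)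
  also have "\<dots> = T $$ (k, k) * u $ k"
  proof (rule sum_single_support)
    fix m assume "m \<in> {..<n}" "m \<noteq> k"
    then show "T $$ (m, k) * u $ m = 0"
      using lead[of m] ut T k unfolding upper_triangular_def by (cases "m < k") auto
  qed (use k in auto)
  finally show ?thesis by (rule sym)
qed

lemma left_eigvecs_separate_upper_triangular:
  fixes T :: "'a :: field mat"
  assumes T: "T \<in> carrier_mat n n" and ut: "upper_triangular T"
    and distinct: "\<And>i j. i < n \<Longrightarrow> j < n \<Longrightarrow> T $$ (i, i) = T $$ (j, j) \<Longrightarrow> i = j"
  shows "left_eigvecs_separate n T"
  unfolding left_eigvecs_separate_def
proof (intro ballI impI)
  fix v :: "'a vec" assume v: "v \<in> carrier_vec n" "v \<noteq> 0\<^sub>v n"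
  obtain i where i: "i < n" "v $ i \<noteq> 0" and v_above: "\<And>m. i < m \<Longrightarrow> m < n \<Longrightarrow> v $ m = 0"
    using nonzero_vec_last_nonzero[OF v] by blast
  have "poly (char_poly (transpose_mat T)) (T $$ (i, i)) = 0"
  proof -
    have "T $$ (i, i) \<in> set (diag_mat T)" using T i by (auto simp: diag_mat_def)
    then show ?thesis
      unfolding char_poly_transpose_mat[OF T] char_poly_upper_triangular[OF T ut]
      by (simp add: poly_prod_list prod_list_zero_iff)
  qed
  then obtain u where u: "u \<in> carrier_vec n" "u \<noteq> 0\<^sub>v n"
    and eig: "transpose_mat T *\<^sub>v u = T $$ (i, i) \<cdot>\<^sub>v u"
    using eigenvalue_root_char_poly[of "transpose_mat T" n] T
    unfolding eigenvalue_def eigenvector_def by auto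
  obtain k where k: "k < n" "u $ k \<noteq> 0" and u_below: "\<And>m. m < k \<Longrightarrow> u $ m = 0"
    using nonzero_vec_first_nonzero[OF u] by blast
  have "T $$ (k, k) = T $$ (i, i)"
    using upper_triangular_left_eigenvector_lead[OF T ut u(1) eig k(1) u_below] k(2) by simp
  then have ki: "k = i" using distinct k i by blast
  have "u \<bullet> v = (\<Sum>m<n. u $ m * v $ m)"
    using v unfolding scalar_prod_def by (simp add: lessThan_atLeast0)
  also have "\<dots> = u $ i * v $ i"
  proof (rule sum_single_support)
    fix m assume "m \<in> {..<n}" "m \<noteq> i"
    then show "u $ m * v $ m = 0" using u_below[of m] v_above[of m] ki by (cases "m < i") auto
  qed (use i in auto)
  finally have "u \<bullet> v \<noteq> 0" using i k ki by simp
  then show "\<exists>l \<in> carrier_vec n. \<exists>\<mu>. transpose_mat T *\<^sub>v l = \<mu> \<cdot>\<^sub>v l \<and> l \<bullet> v \<noteq> 0"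
    using u eig by blast
qed

lemma complex_schur_decomposition:
  fixes A :: "complex mat"
  assumes A: "A \<in> carrier_mat n n"
  obtains P Q T where "P \<in> carrier_mat n n" "Q \<in> carrier_mat n n" "T \<in> carrier_mat n n"
    "P * Q = 1\<^sub>m n" "Q * P = 1\<^sub>m n" "A = P * T * Q" "upper_triangular T"
proof -
  obtain es where "char_poly A = (\<Prod>a\<leftarrow>es. [:- a, 1:])"
    using char_poly_factorized[OF A] by blast
  then obtain T P Q where wit: "similar_mat_wit A T P Q" and ut: "upper_triangular T"
    using schur_decomposition_exists[OF A] unfolding similar_mat_def by blast
  show thesis
    by (rule that[of P Q T]) (use similar_mat_witD2[OF A wit] ut in auto)
qed

lemma null_seq_avoiding:
  fixes S :: "real set"
  assumes "finite S"
  obtains c :: "nat \<Rightarrow> real" where "c \<longlonglongrightarrow> 0" "\<And>k. c k \<notin> S"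
proof -
  have "\<exists>x. x \<in> {0<..<inverse (real (Suc k))} - S" for k
    using Diff_infinite_finite[OF assms infinite_Ioo[of 0 "inverse (real (Suc k))"]]
    by (auto dest: infinite_imp_nonempty)
  then obtain c where c: "\<And>k. c k \<in> {0<..<inverse (real (Suc k))} - S" by metis
  have "c \<longlonglongrightarrow> 0"
  proof (rule real_tendsto_sandwich[of "\<lambda>_. 0" _ _ "\<lambda>k. inverse (real (Suc k))"])
    have "0 \<le> c k" "c k \<le> inverse (real (Suc k))" for k
      using c[of k] by auto
    then show "\<forall>\<^sub>F k in sequentially. 0 \<le> c k"
      "\<forall>\<^sub>F k in sequentially. c k \<le> inverse (real (Suc k))"
      by (auto intro: always_eventually)
  qed (rule tendsto_const LIMSEQ_inverse_real_of_nat)+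
  with c show thesis using that by blast
qed

definition index_diag :: "nat \<Rightarrow> 'a :: semiring_1 mat" where
  "index_diag n = mat n n (\<lambda>(i, j). if i = j then of_nat i else 0)"

lemma left_eigvecs_separate_diag_shift:
  fixes T :: "'a :: field_char_0 mat"
  assumes T: "T \<in> carrier_mat n n" and ut: "upper_triangular T"
    and s: "s \<notin> (\<lambda>(i, j). (T $$ (j, j) - T $$ (i, i)) / (of_nat i - of_nat j)) ` ({..<n} \<times> {..<n})"
  shows "left_eigvecs_separate n (T + s \<cdot>\<^sub>m index_diag n)"
proof (rule left_eigvecs_separate_upper_triangular)
  have entry: "(T + s \<cdot>\<^sub>m index_diag n) $$ (i, j) = T $$ (i, j) + (if i = j then s * of_nat i else 0)"
    if "i < n" "j < n" for i j
    using that T unfolding index_diag_def by auto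
  show "T + s \<cdot>\<^sub>m index_diag n \<in> carrier_mat n n" using T unfolding index_diag_def by simp
  show "upper_triangular (T + s \<cdot>\<^sub>m index_diag n)"
    using ut T entry unfolding upper_triangular_def index_diag_def by auto
  show "i = j" if ij: "i < n" "j < n"
    and eq: "(T + s \<cdot>\<^sub>m index_diag n) $$ (i, i) = (T + s \<cdot>\<^sub>m index_diag n) $$ (j, j)" for i j
  proof (rule ccontr)
    assume "i \<noteq> j"
    then have "(of_nat i - of_nat j :: 'a) \<noteq> 0" by simp
    moreover have "s * (of_nat i - of_nat j) = T $$ (j, j) - T $$ (i, i)"
      using eq ij by (simp add: entry algebra_simps)
    ultimately have "s = (T $$ (j, j) - T $$ (i, i)) / (of_nat i - of_nat j)"
      by (simp add: field_simps)
    with s ij show False by auto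
  qed
qed

text \<open>Perturb a Schur form T of A by s \<cdot> diag(0, 1, \<dots>, n - 1), where the small real s avoids the
  finitely many values making two diagonal entries collide.\<close>

lemma left_eigvecs_separate_perturbation:
  fixes A :: "complex mat"
  assumes A: "A \<in> carrier_mat n n"
  obtains E where "\<And>k. E k \<in> carrier_mat n n"
    and "\<And>i j. i < n \<Longrightarrow> j < n \<Longrightarrow> (\<lambda>k. E k $$ (i, j)) \<longlonglongrightarrow> 0"
    and "\<And>k. left_eigvecs_separate n (A + E k)"
proof -
  obtain P Q T where P: "P \<in> carrier_mat n n" and Q: "Q \<in> carrier_mat n n"
    and T: "T \<in> carrier_mat n n" and PQ: "P * Q = 1\<^sub>m n" and QP: "Q * P = 1\<^sub>m n"
    and A_eq: "A = P * T * Q" and ut: "upper_triangular T"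
    using complex_schur_decomposition[OF A] by blast
  define D :: "complex mat" where "D = index_diag n"
  have D: "D \<in> carrier_mat n n" unfolding D_def index_diag_def by simp
  define bad where "bad = (\<lambda>(i, j). (T $$ (j, j) - T $$ (i, i)) / (of_nat i - of_nat j)) `
    ({..<n} \<times> {..<n})"
  obtain c where c: "c \<longlonglongrightarrow> 0" and good: "\<And>k. c k \<notin> Re ` bad"
    using null_seq_avoiding[of "Re ` bad"] unfolding bad_def by auto
  define E where "E k = complex_of_real (c k) \<cdot>\<^sub>m (P * D * Q)" for k
  show thesis
  proof
    show "E k \<in> carrier_mat n n" for k unfolding E_def using P D Q by simp
    show "(\<lambda>k. E k $$ (i, j)) \<longlonglongrightarrow> 0" if "i < n" "j < n" for i j
    proof -
      have "(\<lambda>k. complex_of_real (c k) * (P * D * Q) $$ (i, j)) \<longlonglongrightarrow> 0"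
        using tendsto_of_real[OF c, where 'a = complex] by (simp add: tendsto_mult_left_zero)
      then show ?thesis using that P D Q by (simp add: E_def)
    qed
    show "left_eigvecs_separate n (A + E k)" for k
    proof -
      define s where "s = complex_of_real (c k)"
      have "s \<notin> bad" using good[of k] unfolding s_def by (metis Re_complex_of_real image_eqI)
      then have "left_eigvecs_separate n (T + s \<cdot>\<^sub>m D)"
        unfolding D_def bad_def by (rule left_eigvecs_separate_diag_shift[OF T ut])
      moreover have "P * (T + s \<cdot>\<^sub>m D) = P * T + s \<cdot>\<^sub>m (P * D)"
        using P T D by (simp add: mult_add_distrib_mat[of _ n n] mult_smult_distrib[of _ n n])
      then have "A + E k = P * (T + s \<cdot>\<^sub>m D) * Q"
        using P T D Q by (simp add: A_eq E_def s_def add_mult_distrib_mat[of _ n n]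
            mult_smult_assoc_mat[of _ n n])
      ultimately show ?thesis
        using T D P Q PQ QP by (simp add: left_eigvecs_separate_similar)
    qed
  qed
qed

lemma exists_inverse_first_row:
  fixes w :: "'a :: field vec"
  assumes w0: "w $ 0 = 1" and n: "0 < n"
  obtains R R' where "R \<in> carrier_mat n n" "R' \<in> carrier_mat n n" "R * R' = 1\<^sub>m n" "R' * R = 1\<^sub>m n"
    "\<And>i j. i < n \<Longrightarrow> j < n \<Longrightarrow> R $$ (i, j) = (if i = 0 then w $ j else if i = j then 1 else 0)"
    "\<And>i. i < n \<Longrightarrow> R' $$ (i, 0) = (if i = 0 then 1 else 0)"
proof -
  define R where "R = mat n n (\<lambda>(i, j). if i = 0 then w $ j else if i = j then 1 else 0)"
  have R: "R \<in> carrier_mat n n" unfolding R_def by simp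
  have R_index: "R $$ (i, j) = (if i = 0 then w $ j else if i = j then 1 else 0)"
    if "i < n" "j < n" for i j
    using that unfolding R_def by simp
  have "det R = 1"
  proof -
    have "upper_triangular R" using R unfolding upper_triangular_def by (auto simp: R_index)
    moreover have "diag_mat R = replicate n 1"
      using R by (auto simp: diag_mat_def list_eq_iff_nth_eq R_index w0)
    ultimately show ?thesis using det_upper_triangular[OF _ R] by simp
  qed
  then obtain R' where R': "R' \<in> carrier_mat n n" and RR': "R * R' = 1\<^sub>m n" and R'R: "R' * R = 1\<^sub>m n"
    using det_non_zero_imp_unit[OF R, of "()"] unfolding Units_def ring_mat_def by auto
  have "R' $$ (i, 0) = (if i = 0 then 1 else 0)" if i: "i < n" for i
  proof -
    have "(R' * R) $$ (i, 0) = (\<Sum>m<n. R' $$ (i, m) * R $$ (m, 0))"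
      using index_mult_mat_sum[OF R' R i n] .
    also have "\<dots> = R' $$ (i, 0) * R $$ (0, 0)"
      by (rule sum_single_support) (use n in \<open>auto simp: R_index\<close>)
    finally show ?thesis using R'R i n by (simp add: R_index w0)
  qed
  with R R' RR' R'R R_index show thesis by (rule that)
qed

lemma first_row_change_of_basis:
  fixes w :: "'a :: field vec"
  assumes w: "w \<in> carrier_vec n" and w0: "w $ 0 = 1" and n: "0 < n"
  obtains R R' where "R \<in> carrier_mat n n" "R' \<in> carrier_mat n n" "R * R' = 1\<^sub>m n" "R' * R = 1\<^sub>m n"
    "\<And>(B :: 'a mat) i. B \<in> carrier_mat n n \<Longrightarrow> (\<And>m. 0 < m \<Longrightarrow> m < n \<Longrightarrow> B $$ (m, 0) = 0) \<Longrightarrow>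
       0 < i \<Longrightarrow> i < n \<Longrightarrow> (R * B * R') $$ (i, 0) = 0"
    "\<And>(Z :: 'a mat) \<mu> j. Z \<in> carrier_mat n n \<Longrightarrow> transpose_mat Z *\<^sub>v w = \<mu> \<cdot>\<^sub>v w \<Longrightarrow>
       0 < j \<Longrightarrow> j < n \<Longrightarrow> (R * Z * R') $$ (0, j) = 0"
proof -
  obtain R R' where R: "R \<in> carrier_mat n n" and R': "R' \<in> carrier_mat n n"
    and RR': "R * R' = 1\<^sub>m n" and R'R: "R' * R = 1\<^sub>m n"
    and R_index: "\<And>i j. i < n \<Longrightarrow> j < n \<Longrightarrow> R $$ (i, j) = (if i = 0 then w $ j else if i = j then 1 else 0)"
    and R'_col0: "\<And>i. i < n \<Longrightarrow> R' $$ (i, 0) = (if i = 0 then 1 else 0)"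
    using exists_inverse_first_row[OF w0 n] by blast
  show thesis
  proof (rule that[OF R R' RR' R'R])
    fix B :: "'a mat" and i assume B: "B \<in> carrier_mat n n"
      and B_col0: "\<And>m. 0 < m \<Longrightarrow> m < n \<Longrightarrow> B $$ (m, 0) = 0" and i: "0 < i" "i < n"
    have RB: "R * B \<in> carrier_mat n n" using R B by simp
    have "(R * B * R') $$ (i, 0) = (\<Sum>m<n. (R * B) $$ (i, m) * R' $$ (m, 0))"
      using index_mult_mat_sum[OF RB R' i(2) n] .
    also have "\<dots> = (R * B) $$ (i, 0) * R' $$ (0, 0)"
      by (rule sum_single_support) (use n in \<open>auto simp: R'_col0\<close>)
    also have "(R * B) $$ (i, 0) = (\<Sum>m<n. R $$ (i, m) * B $$ (m, 0))"
      using index_mult_mat_sum[OF R B i(2) n] .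
    also have "\<dots> = R $$ (i, i) * B $$ (i, 0)"
      by (rule sum_single_support) (use i in \<open>auto simp: R_index\<close>)
    finally show "(R * B * R') $$ (i, 0) = 0" using B_col0 i by simp
  next
    fix Z :: "'a mat" and \<mu> j assume Z: "Z \<in> carrier_mat n n"
      and eig: "transpose_mat Z *\<^sub>v w = \<mu> \<cdot>\<^sub>v w" and j: "0 < j" "j < n"
    have RZ_row0: "(R * Z) $$ (0, m) = \<mu> * R $$ (0, m)" if m: "m < n" for m
    proof -
      have "(R * Z) $$ (0, m) = (\<Sum>a<n. Z $$ (a, m) * w $ a)"
        using index_mult_mat_sum[OF R Z n m] by (simp add: R_index mult.commute)
      also have "\<dots> = (transpose_mat Z *\<^sub>v w) $ m"
        using Z w m by (auto simp: scalar_prod_def lessThan_atLeast0 intro!: sum.cong)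
      finally show ?thesis using eig w m n by (simp add: R_index)
    qed
    have RZ: "R * Z \<in> carrier_mat n n" using R Z by simp
    have "(R * Z * R') $$ (0, j) = (\<Sum>m<n. (R * Z) $$ (0, m) * R' $$ (m, j))"
      using index_mult_mat_sum[OF RZ R' n j(2)] .
    also have "\<dots> = \<mu> * (R * R') $$ (0, j)"
      using index_mult_mat_sum[OF R R' n j(2)] by (simp add: RZ_row0 sum_distrib_left mult.assoc)
    finally show "(R * Z * R') $$ (0, j) = 0" using RR' j by simp
  qed
qed

text \<open>The new first basis vector is an eigenvector of Ap (taken from a Schur form), and the
  other ones span the kernel of a left eigenvector of Am that does not vanish on it.\<close>

lemma exists_adapted_basis:
  fixes Ap Am :: "complex mat"
  assumes Ap: "Ap \<in> carrier_mat n n" and Am: "Am \<in> carrier_mat n n" and n: "0 < n"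
    and sep: "left_eigvecs_separate n Am"
  obtains G H where "G \<in> carrier_mat n n" "H \<in> carrier_mat n n" "G * H = 1\<^sub>m n" "H * G = 1\<^sub>m n"
    "\<And>i. 0 < i \<Longrightarrow> i < n \<Longrightarrow> (G * Ap * H) $$ (i, 0) = 0"
    "\<And>j. 0 < j \<Longrightarrow> j < n \<Longrightarrow> (G * Am * H) $$ (0, j) = 0"
proof -
  obtain P Q T where P: "P \<in> carrier_mat n n" and Q: "Q \<in> carrier_mat n n"
    and T: "T \<in> carrier_mat n n" and PQ: "P * Q = 1\<^sub>m n" and QP: "Q * P = 1\<^sub>m n"
    and Ap_eq: "Ap = P * T * Q" and ut: "upper_triangular T"
    using complex_schur_decomposition[OF Ap] by blast
  define Z where "Z = Q * Am * P"
  have Z: "Z \<in> carrier_mat n n" unfolding Z_def using Q Am P by simp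
  have "left_eigvecs_separate n Z"
    unfolding Z_def using left_eigvecs_separate_similar[OF sep Am Q P QP PQ] .
  moreover have "unit_vec n 0 \<noteq> (0\<^sub>v n :: complex vec)"
    using n by (metis index_unit_vec(1) index_zero_vec(1) zero_neq_one)
  ultimately obtain l \<mu> where l: "l \<in> carrier_vec n" and eig: "transpose_mat Z *\<^sub>v l = \<mu> \<cdot>\<^sub>v l"
    and l0: "l $ 0 \<noteq> 0"
    unfolding left_eigvecs_separate_def using n by fastforce
  define w where "w = (1 / l $ 0) \<cdot>\<^sub>v l"
  have w: "w \<in> carrier_vec n" and w0: "w $ 0 = 1" using l l0 n unfolding w_def by auto
  have w_eig: "transpose_mat Z *\<^sub>v w = \<mu> \<cdot>\<^sub>v w"
    using Z l unfolding w_def by (simp add: mult_mat_vec eig smult_smult_assoc mult.commute)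
  obtain R R' where R: "R \<in> carrier_mat n n" and R': "R' \<in> carrier_mat n n"
    and RR': "R * R' = 1\<^sub>m n" and R'R: "R' * R = 1\<^sub>m n"
    and col0: "\<And>B i. B \<in> carrier_mat n n \<Longrightarrow> (\<And>m. 0 < m \<Longrightarrow> m < n \<Longrightarrow> B $$ (m, 0) = 0) \<Longrightarrow>
       0 < i \<Longrightarrow> i < n \<Longrightarrow> (R * B * R') $$ (i, 0) = 0"
    and row0: "\<And>j. 0 < j \<Longrightarrow> j < n \<Longrightarrow> (R * Z * R') $$ (0, j) = 0"
    using first_row_change_of_basis[OF w w0 n] Z w_eig by metis
  have conj: "(R * Q) * X * (P * R') = R * (Q * X * P) * R'" if "X \<in> carrier_mat n n" for X
    using R Q that P R' by (simp add: assoc_mult_mat[of _ n n _ n _ n])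
  show thesis
  proof (rule that[of "R * Q" "P * R'"])
    show "R * Q \<in> carrier_mat n n" "P * R' \<in> carrier_mat n n" using R Q P R' by auto
    show "R * Q * (P * R') = 1\<^sub>m n"
      using conj[of "1\<^sub>m n"] R Q P R' QP RR' by simp
    have "P * R' * (R * Q) = P * ((R' * R) * Q)"
      using P R' R Q by (simp add: assoc_mult_mat[of _ n n _ n _ n])
    then show "P * R' * (R * Q) = 1\<^sub>m n" using R'R PQ Q by simp
  next
    have "Q * Ap * P = (Q * P) * T * (Q * P)"
      using P Q T unfolding Ap_eq by (simp add: assoc_mult_mat[of _ n n _ n _ n])
    then have "Q * Ap * P = T" using QP T by simp
    moreover have "T $$ (m, 0) = 0" if "0 < m" "m < n" for m
      using ut T that unfolding upper_triangular_def by auto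
    ultimately show "(R * Q * Ap * (P * R')) $$ (i, 0) = 0" if "0 < i" "i < n" for i
      using col0[OF T] conj[OF Ap] that by simp
  next
    show "(R * Q * Am * (P * R')) $$ (0, j) = 0" if "0 < j" "j < n" for j
      using row0 conj[OF Am] that unfolding Z_def by simp
  qed
qed

section \<open>Conjugating into the image of the multiplication map\<close>

definition to_mat :: "nat \<Rightarrow> nat \<Rightarrow> cmat \<Rightarrow> complex mat" where
  "to_mat r c A = mat r c (\<lambda>(i, j). A i j)"

definition of_mat :: "complex mat \<Rightarrow> cmat" where
  "of_mat M = (\<lambda>i j. if i < dim_row M \<and> j < dim_col M then M $$ (i, j) else 0)"

lemma to_mat_carrier [simp]: "to_mat r c A \<in> carrier_mat r c"
  unfolding to_mat_def by simp

lemma index_to_mat [simp]: "i < r \<Longrightarrow> j < c \<Longrightarrow> to_mat r c A $$ (i, j) = A i j"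
  unfolding to_mat_def by simp

lemma of_mat_to_mat: "supported r c A \<Longrightarrow> of_mat (to_mat r c A) = A"
  unfolding of_mat_def to_mat_def supported_def by (auto intro!: ext)

lemma of_mat_index: "M \<in> carrier_mat r c \<Longrightarrow> of_mat M i j = (if i < r \<and> j < c then M $$ (i, j) else 0)"
  unfolding of_mat_def by auto

lemma supported_of_mat: "M \<in> carrier_mat r c \<Longrightarrow> supported r c (of_mat M)"
  unfolding of_mat_def supported_def by auto

lemma mmul_of_mat:
  assumes A: "A \<in> carrier_mat r m" and B: "B \<in> carrier_mat m c"
  shows "mmul m (of_mat A) (of_mat B) = of_mat (A * B)"
proof (intro ext)
  fix i j
  show "mmul m (of_mat A) (of_mat B) i j = of_mat (A * B) i j"
    using index_mult_mat_sum[OF A B, of i j]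
    by (auto simp: mmul_def of_mat_index[OF A] of_mat_index[OF B]
        of_mat_index[OF mult_carrier_mat[OF A B]] intro!: sum.cong)
qed

lemma GL_pair_of_mat:
  assumes "G \<in> carrier_mat n n" "H \<in> carrier_mat n n" "G * H = 1\<^sub>m n" "H * G = 1\<^sub>m n"
  shows "GL_pair n (of_mat G) (of_mat H)"
proof -
  have "idm n = of_mat (1\<^sub>m n)"
    unfolding idm_def of_mat_def by (auto intro!: ext)
  then show ?thesis
    using assms unfolding GL_pair_def by (simp add: supported_of_mat mmul_of_mat)
qed

lemma act_of_mat:
  assumes G: "G \<in> carrier_mat n n" and H: "H \<in> carrier_mat n n"
    and B: "B \<in> carrier_mat n n" and P: "P \<in> carrier_mat n K" and Q: "Q \<in> carrier_mat K n"
  shows "act n K (of_mat G) (of_mat H) (of_mat B, of_mat P, of_mat Q) =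
    (of_mat (G * B * H), of_mat (G * P), of_mat (Q * H))"
  unfolding act_def using mmul_of_mat[OF G B] mmul_of_mat[OF mult_carrier_mat[OF G B] H]
    mmul_of_mat[OF G P] mmul_of_mat[OF Q H] by simp

lemma of_mat_in_mult_map_one_image:
  assumes B': "B' \<in> carrier_mat (Suc N) (Suc N)" and S: "S \<in> carrier_mat (Suc N) K"
    and T: "T \<in> carrier_mat K (Suc N)"
    and col0: "\<And>i. 0 < i \<Longrightarrow> i < Suc N \<Longrightarrow> (B' + S * T) $$ (i, 0) = 0"
    and row0: "\<And>j. 0 < j \<Longrightarrow> j < Suc N \<Longrightarrow> (B' - S * T) $$ (0, j) = 0"
  shows "\<exists>x1\<in>Rep 1 K. \<exists>x2\<in>Rep N K. (of_mat B', of_mat S, of_mat T) = mult_map 1 N K x1 x2"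
proof (rule block_form_in_mult_map_image)
  have ST: "S * T \<in> carrier_mat (Suc N) (Suc N)" using S T by (rule mult_carrier_mat)
  have ST_of_mat: "of_mat (S * T) i j = (\<Sum>a<K. of_mat S i a * of_mat T a j)" for i j
    unfolding mmul_of_mat[OF S T, symmetric] mmul_def by (rule refl)
  show "(of_mat B', of_mat S, of_mat T) \<in> Rep (1 + N) K"
    using supported_of_mat[OF B'] supported_of_mat[OF S] supported_of_mat[OF T]
    unfolding Rep_def by simp
  show "of_mat B' i j = (\<Sum>a<K. of_mat S i a * of_mat T a j)"
    if "i < 1" "1 \<le> j" "j < 1 + N" for i j
    using row0[of j] that carrier_matD[OF B'] carrier_matD[OF ST]
    by (simp add: of_mat_index[OF B'] ST_of_mat[symmetric] of_mat_index[OF ST])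
  show "of_mat B' i j = - (\<Sum>a<K. of_mat S i a * of_mat T a j)"
    if "j < 1" "1 \<le> i" "i < 1 + N" for i j
    using col0[of i] that carrier_matD[OF B'] carrier_matD[OF ST]
    by (simp add: of_mat_index[OF B'] ST_of_mat[symmetric] of_mat_index[OF ST] eq_neg_iff_add_eq_0)
qed

lemma GL_conj_into_mult_map_one_image:
  assumes x: "(B, psi, psib) \<in> Rep (Suc N) K"
    and sep: "left_eigvecs_separate (Suc N)
      (to_mat (Suc N) (Suc N) B - to_mat (Suc N) K psi * to_mat K (Suc N) psib)"
  obtains g h x1 x2 where "GL_pair (Suc N) g h" "x1 \<in> Rep 1 K" "x2 \<in> Rep N K"
    "act (Suc N) K g h (B, psi, psib) = mult_map 1 N K x1 x2"
proof -
  define n where "n = Suc N"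
  define Bm Ps Pb where "Bm = to_mat n n B" and "Ps = to_mat n K psi" and "Pb = to_mat K n psib"
  have Bm: "Bm \<in> carrier_mat n n" and Ps: "Ps \<in> carrier_mat n K" and Pb: "Pb \<in> carrier_mat K n"
    unfolding Bm_def Ps_def Pb_def by auto
  have PP: "Ps * Pb \<in> carrier_mat n n" using Ps Pb by (rule mult_carrier_mat)
  have Ap: "Bm + Ps * Pb \<in> carrier_mat n n" and Am: "Bm - Ps * Pb \<in> carrier_mat n n"
    using Bm PP by (auto simp: minus_carrier_mat)
  have n0: "0 < n" unfolding n_def by simp
  have sep': "left_eigvecs_separate n (Bm - Ps * Pb)"
    using sep unfolding n_def Bm_def Ps_def Pb_def .
  obtain G H where G: "G \<in> carrier_mat n n" and H: "H \<in> carrier_mat n n"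
    and GH: "G * H = 1\<^sub>m n" and HG: "H * G = 1\<^sub>m n"
    and col0: "\<And>i. 0 < i \<Longrightarrow> i < n \<Longrightarrow> (G * (Bm + Ps * Pb) * H) $$ (i, 0) = 0"
    and row0: "\<And>j. 0 < j \<Longrightarrow> j < n \<Longrightarrow> (G * (Bm - Ps * Pb) * H) $$ (0, j) = 0"
    using exists_adapted_basis[OF Ap Am n0 sep'] by blast
  define B' S T where "B' = G * Bm * H" and "S = G * Ps" and "T = Pb * H"
  have B': "B' \<in> carrier_mat n n" and S: "S \<in> carrier_mat n K" and T: "T \<in> carrier_mat K n"
    unfolding B'_def S_def T_def using G Bm H Ps Pb by auto
  have "G * (Ps * Pb) * H = G * (Ps * (Pb * H))"
    using G Ps Pb H PP by (simp add: assoc_mult_mat[of G n n "Ps * Pb" n H n])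
  also have "\<dots> = S * T"
    unfolding S_def T_def using G Ps Pb H by (simp add: assoc_mult_mat[of G n n Ps K "Pb * H" n])
  finally have "G * (Bm + Ps * Pb) * H = B' + S * T" and "G * (Bm - Ps * Pb) * H = B' - S * T"
    unfolding B'_def using G Bm PP H
    by (simp_all add: mult_add_distrib_mat[of _ n n] add_mult_distrib_mat[of _ n n]
        mult_minus_distrib_mat[of _ n n] minus_mult_distrib_mat[of _ n n])
  with B' S T col0 row0 obtain x1 x2 where "x1 \<in> Rep 1 K" "x2 \<in> Rep N K"
    and "(of_mat B', of_mat S, of_mat T) = mult_map 1 N K x1 x2"
    using of_mat_in_mult_map_one_image[of B' N S K T] unfolding n_def by auto
  moreover have "act n K (of_mat G) (of_mat H) (B, psi, psib) = (of_mat B', of_mat S, of_mat T)"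
    using act_of_mat[OF G H Bm Ps Pb] x of_mat_to_mat
    unfolding B'_def S_def T_def Bm_def Ps_def Pb_def Rep_def n_def by auto
  ultimately show thesis
    using that GL_pair_of_mat[OF G H GH HG] unfolding n_def by metis
qed

lemma invariant_poly_vanishes_at_separating:
  assumes inv: "invariant_poly (Suc N) K f"
    and van: "\<forall>x1\<in>Rep 1 K. \<forall>x2\<in>Rep N K. f (mult_map 1 N K x1 x2) = 0"
    and x: "(B, psi, psib) \<in> Rep (Suc N) K"
    and sep: "left_eigvecs_separate (Suc N)
      (to_mat (Suc N) (Suc N) B - to_mat (Suc N) K psi * to_mat K (Suc N) psib)"
  shows "f (B, psi, psib) = 0"
proof -
  obtain g h x1 x2 where gh: "GL_pair (Suc N) g h" and "x1 \<in> Rep 1 K" "x2 \<in> Rep N K"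
    and act_eq: "act (Suc N) K g h (B, psi, psib) = mult_map 1 N K x1 x2"
    using GL_conj_into_mult_map_one_image[OF x sep] by blast
  have "f (B, psi, psib) = f (act (Suc N) K g h (B, psi, psib))"
    using inv gh x unfolding invariant_poly_def by metis
  also have "\<dots> = 0" using van \<open>x1 \<in> Rep 1 K\<close> \<open>x2 \<in> Rep N K\<close> unfolding act_eq by blast
  finally show ?thesis .
qed

lemma invariant_poly_vanishes_if_vanishes_on_mult_map_one:
  assumes inv: "invariant_poly (Suc N) K f"
    and van: "\<forall>x1\<in>Rep 1 K. \<forall>x2\<in>Rep N K. f (mult_map 1 N K x1 x2) = 0"
    and x: "x \<in> Rep (Suc N) K"
  shows "f x = 0"
proof -
  define n where "n = Suc N"
  obtain B psi psib where x_eq: "x = (B, psi, psib)" by (cases x)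
  define Am where "Am = to_mat n n B - to_mat n K psi * to_mat K n psib"
  have Am: "Am \<in> carrier_mat n n"
    using mult_carrier_mat[OF to_mat_carrier[of n K psi] to_mat_carrier[of K n psib]]
    unfolding Am_def by (simp add: minus_carrier_mat)
  obtain E where E: "\<And>k. E k \<in> carrier_mat n n"
    and E_lim: "\<And>i j. i < n \<Longrightarrow> j < n \<Longrightarrow> (\<lambda>k. E k $$ (i, j)) \<longlonglongrightarrow> 0"
    and E_sep: "\<And>k. left_eigvecs_separate n (Am + E k)"
    using left_eigvecs_separate_perturbation[OF Am] by blast
  define Bk where "Bk k = (\<lambda>i j. B i j + of_mat (E k) i j)" for k
  have Bk_Rep: "(Bk k, psi, psib) \<in> Rep n K" for k
    using x supported_of_mat[OF E[of k]] unfolding x_eq Rep_def Bk_def supported_def n_def by auto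
  have Bk_mat: "to_mat n n (Bk k) - to_mat n K psi * to_mat K n psib = Am + E k" for k
    using E[of k] carrier_matD[OF to_mat_carrier[of n K psi]] carrier_matD[OF to_mat_carrier[of K n psib]]
    unfolding Am_def by (intro eq_matI) (auto simp: Bk_def of_mat_index[OF E[of k]])
  have "left_eigvecs_separate n (to_mat n n (Bk k) - to_mat n K psi * to_mat K n psib)" for k
    unfolding Bk_mat by (rule E_sep)
  then have "f (Bk k, psi, psib) = 0" for k
    using invariant_poly_vanishes_at_separating[OF inv van] Bk_Rep unfolding n_def by blast
  then have "(\<lambda>k. f (Bk k, psi, psib)) \<longlonglongrightarrow> 0" by simp
  moreover have "(\<lambda>k. f (Bk k, psi, psib)) \<longlonglongrightarrow> f (B, psi, psib)"
  proof (rule poly_fun_tendsto)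
    show "poly_fun f" using inv unfolding invariant_poly_def by simp
    show "(\<lambda>k. fst (Bk k, psi, psib) i j) \<longlonglongrightarrow> fst (B, psi, psib) i j" for i j
    proof (cases "i < n \<and> j < n")
      case True
      then have "(\<lambda>k. B i j + E k $$ (i, j)) \<longlonglongrightarrow> B i j + 0"
        by (intro tendsto_add tendsto_const E_lim) auto
      then show ?thesis using True by (simp add: Bk_def of_mat_index[OF E])
    qed (auto simp: Bk_def of_mat_index[OF E])
  qed simp_all
  ultimately show ?thesis unfolding x_eq using LIMSEQ_unique by metis
qed

lemma invariant_poly_vanishes_if_vanishes_on_split_Rep:
  "invariant_poly N K f \<Longrightarrow> (\<forall>x\<in>split_Rep N K. f x = 0) \<Longrightarrow> x \<in> Rep N K \<Longrightarrow> f x = 0"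
proof (induction N arbitrary: f x)
  case 0
  then show ?case unfolding split_Rep_def by auto
next
  case (Suc N)
  show ?case
  proof (rule invariant_poly_vanishes_if_vanishes_on_mult_map_one[OF Suc.prems(1) _ Suc.prems(3)],
      intro ballI)
    fix x1 x2 assume x1: "x1 \<in> Rep 1 K" and x2: "x2 \<in> Rep N K"
    show "f (mult_map 1 N K x1 x2) = 0"
    proof (rule Suc.IH[OF invariant_poly_mult_map_one[OF Suc.prems(1) x1] _ x2])
      show "\<forall>y\<in>split_Rep N K. f (mult_map 1 N K x1 y) = 0"
        using mult_map_one_split_Rep[OF x1] Suc.prems(2) by blast
    qed
  qed
qed

theorem mainTheorem10:
  fixes N1 N2 K :: nat
  shows "mult_dominant N1 N2 K"
  unfolding mult_dominant_def
proof (intro allI impI ballI)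
  fix f x
  assume inv: "invariant_poly (N1 + N2) K f"
    and van: "\<forall>x1\<in>Rep N1 K. \<forall>x2\<in>Rep N2 K. f (mult_map N1 N2 K x1 x2) = 0"
    and x: "x \<in> Rep (N1 + N2) K"
  have "\<forall>y\<in>split_Rep (N1 + N2) K. f y = 0"
    using split_Rep_in_mult_map_image van by blast
  then show "f x = 0"
    using invariant_poly_vanishes_if_vanishes_on_split_Rep[OF inv _ x] by blast
qed

end
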